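(* If $p\in\mathbb{N}$ is odd, then there does not exist a UPB in $(\mathbb{C}^2)^{\otimes p}$ consisting of exactly $p+2$ states.
   Context: A product state in $(\mathbb{C}^2)^{\otimes p}$ is a vector $|v_1\rangle\otimes\cdots\otimes|v_p\rangle$ with each $|v_j\rangle\in\mathbb{C}^2$. A $p$-qubit unextendible product basis (UPB) is a finite set $\mathcal{S}\subseteq(\mathbb{C}^2)^{\otimes p}$ of unit product vectors that are pairwise orthogonal, such that no nonzero product vector outside $\mathcal{S}$ is orthogonal to every element of $\mathcal{S}$. The size (number of states) of a UPB is its number of elements. *)

theory Defs
  imports Complex_Main
begin

text \<open>The space (C^2)^{tensor p} is modelled as complex-valued functions on the
computational basis, i.e. on bit strings of length p, encoded as functions
nat => bool that are False outside {0..<p}.  Values outside the basis are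
irrelevant (the inner product only sums over the basis).\<close>

definition bitstrings :: "nat \<Rightarrow> (nat \<Rightarrow> bool) set" where
  "bitstrings p = {b. \<forall>i\<ge>p. b i = False}"

type_synonym qvec = "(nat \<Rightarrow> bool) \<Rightarrow> complex"

definition qinner :: "nat \<Rightarrow> qvec \<Rightarrow> qvec \<Rightarrow> complex" where
  "qinner p x y = (\<Sum>b\<in>bitstrings p. cnj (x b) * y b)"

definition tensor :: "nat \<Rightarrow> (nat \<Rightarrow> bool \<Rightarrow> complex) \<Rightarrow> qvec" where
  "tensor p v = (\<lambda>b. if b \<in> bitstrings p then (\<Prod>i<p. v i (b i)) else 0)"

definition is_product :: "nat \<Rightarrow> qvec \<Rightarrow> bool" where
  "is_product p x \<longleftrightarrow> (\<exists>v. x = tensor p v)"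

definition is_UPB :: "nat \<Rightarrow> qvec set \<Rightarrow> bool" where
  "is_UPB p S \<longleftrightarrow>
     finite S \<and>
     (\<forall>x\<in>S. is_product p x \<and> qinner p x x = 1) \<and>
     (\<forall>x\<in>S. \<forall>y\<in>S. x \<noteq> y \<longrightarrow> qinner p x y = 0) \<and>
     (\<forall>z. is_product p z \<and> z \<noteq> (\<lambda>_. 0) \<and> z \<notin> S \<longrightarrow> (\<exists>x\<in>S. qinner p x z \<noteq> 0))"

end

theory Submission
  imports Defs "HOL-Library.Disjoint_Sets" "HOL-Library.Z2"
begin

(* Write each state x of the UPB as a tensor product of local vectors v x k in C^2.  Since C^2
   is two-dimensional, the vectors orthogonal to a nonzero vector are all parallel, and
   unextendibility says that one cannot choose one line per party such that every state has a
   local vector parallel to the chosen line at some party.  With p + 2 states this forbids three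
   parallel local vectors at one party as well as two disjoint parallel pairs at different
   parties, and it gives every state an orthogonal partner at every party.  Counting the
   orthogonal pairs at party k modulo 2 shows that an odd number of states have two orthogonal
   partners there; this forces a unique parallel pair at each party and then exactly one such
   state.  But each state is orthogonal to the p + 1 others through only p parties, so it has two
   partners at some party, and hence p + 2 <= p. *)

lemma even_card_involution:
  assumes "\<And>x. x \<in> X \<Longrightarrow> h x \<in> X" "\<And>x. x \<in> X \<Longrightarrow> h (h x) = x"
    and "\<And>x. x \<in> X \<Longrightarrow> h x \<noteq> x"
  shows "even (card X)"
proof -
  have "(\<Sum>x\<in>X. 1 :: bit) = 0"
    by (rule sum_involution_eq_0[where h = h]) (use assms in auto)
  then show ?thesis
    by (metis even_of_nat_iff even_zero sum_constant mult_1_right)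
qed

lemma card_2_subset_Un:
  assumes "card R = 2" "R \<inter> P \<noteq> {}" "R \<inter> Q \<noteq> {}" "P \<inter> Q = {}"
  shows "R \<subseteq> P \<union> Q"
  using assms by (auto simp: card_2_iff)

section \<open>Geometry of \<open>\<complex>\<^sup>2\<close>\<close>

definition inner2 :: "(bool \<Rightarrow> complex) \<Rightarrow> (bool \<Rightarrow> complex) \<Rightarrow> complex" where
  "inner2 a b = cnj (a False) * b False + cnj (a True) * b True"

definition nonzero2 :: "(bool \<Rightarrow> complex) \<Rightarrow> bool" where
  "nonzero2 a \<longleftrightarrow> a False \<noteq> 0 \<or> a True \<noteq> 0"

definition parallel2 :: "(bool \<Rightarrow> complex) \<Rightarrow> (bool \<Rightarrow> complex) \<Rightarrow> bool" where
  "parallel2 a b \<longleftrightarrow> a False * b True = a True * b False"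

definition perp2 :: "(bool \<Rightarrow> complex) \<Rightarrow> bool \<Rightarrow> complex" where
  "perp2 a = (\<lambda>t. if t then - cnj (a False) else cnj (a True))"

lemma inner2_eq_0_commute: "inner2 a b = 0 \<Longrightarrow> inner2 b a = 0"
proof -
  assume "inner2 a b = 0"
  then have "cnj (inner2 a b) = 0" by simp
  then show ?thesis unfolding inner2_def by (simp add: mult.commute)
qed

lemma inner2_perp2: "inner2 a (perp2 a) = 0"
  unfolding inner2_def perp2_def by (simp add: mult.commute)

lemma nonzero2_perp2: "nonzero2 a \<Longrightarrow> nonzero2 (perp2 a)"
  unfolding nonzero2_def perp2_def by auto

lemma inner2_self_neq_0: "nonzero2 a \<Longrightarrow> inner2 a a \<noteq> 0"
proof
  assume nz: "nonzero2 a" and "inner2 a a = 0"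
  moreover have "inner2 a a = complex_of_real ((cmod (a False))\<^sup>2 + (cmod (a True))\<^sup>2)"
    unfolding inner2_def
    by (simp add: complex_norm_square[symmetric] mult.commute del: of_real_power)
  ultimately have "(cmod (a False))\<^sup>2 + (cmod (a True))\<^sup>2 = 0"
    by (simp only: of_real_eq_0_iff)
  then have "a False = 0 \<and> a True = 0"
    by (simp add: add_nonneg_eq_0_iff)
  with nz show False unfolding nonzero2_def by auto
qed

lemma parallel2_refl: "parallel2 a a"
  unfolding parallel2_def by (simp add: mult.commute)

lemma parallel2_sym: "parallel2 a b \<Longrightarrow> parallel2 b a"
  unfolding parallel2_def by (simp add: mult.commute)

text \<open>The next three lemmas are where the dimension 2 enters: a nonzero vector of
  \<open>\<complex>\<^sup>2\<close> spans a line, and its orthogonal complement is again a line.\<close>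

lemma parallel2_trans:
  assumes "parallel2 a b" "parallel2 b c" "nonzero2 b"
  shows "parallel2 a c"
proof -
  have "(a False * c True - a True * c False) * b False = 0"
    "(a False * c True - a True * c False) * b True = 0"
    using assms(1,2) unfolding parallel2_def by algebra+
  with assms(3) show ?thesis unfolding parallel2_def nonzero2_def by auto
qed

lemma parallel2_inner2_eq_0:
  assumes "parallel2 a b" "inner2 b c = 0" "nonzero2 b"
  shows "inner2 a c = 0"
proof -
  have ab: "cnj (a False) * cnj (b True) = cnj (a True) * cnj (b False)"
    using arg_cong[OF assms(1)[unfolded parallel2_def], of cnj] by simp
  have "inner2 a c * cnj (b False) = 0" "inner2 a c * cnj (b True) = 0"
    using ab assms(2) unfolding inner2_def by algebra+
  with assms(3) show ?thesis unfolding nonzero2_def by auto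
qed

lemma inner2_eq_0_parallel2:
  assumes "inner2 a b = 0" "inner2 b c = 0" "nonzero2 b"
  shows "parallel2 a c"
proof -
  have bc: "b False * cnj (c False) + b True * cnj (c True) = 0"
    using arg_cong[OF assms(2)[unfolded inner2_def], of cnj] by simp
  have "cnj (a False * c True - a True * c False) * b False = 0"
    "cnj (a False * c True - a True * c False) * b True = 0"
    using assms(1) bc unfolding inner2_def by simp_all algebra+
  with assms(3) have "cnj (a False * c True - a True * c False) = 0"
    unfolding nonzero2_def by auto
  then show ?thesis unfolding parallel2_def by (simp only: complex_cnj_zero_iff right_minus_eq)
qed

section \<open>Product vectors\<close>

lemma bitstrings_0: "bitstrings 0 = {\<lambda>_. False}"
  unfolding bitstrings_def by auto

lemma bitstrings_Suc: "bitstrings (Suc p) = (\<lambda>(b, t). b(p := t)) ` (bitstrings p \<times> UNIV)"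
proof
  show "bitstrings (Suc p) \<subseteq> (\<lambda>(b, t). b(p := t)) ` (bitstrings p \<times> UNIV)"
  proof
    fix b assume b: "b \<in> bitstrings (Suc p)"
    then have "(b(p := False), b p) \<in> bitstrings p \<times> UNIV"
      unfolding bitstrings_def by auto
    moreover have "b = (\<lambda>(b, t). b(p := t)) (b(p := False), b p)" by simp
    ultimately show "b \<in> (\<lambda>(b, t). b(p := t)) ` (bitstrings p \<times> UNIV)" by blast
  qed
qed (auto simp: bitstrings_def)

lemma inj_on_bitstrings_Suc: "inj_on (\<lambda>(b, t). b(p := t)) (bitstrings p \<times> UNIV)"
proof (rule inj_onI, clarify)
  fix b t b' t'
  assume b: "b \<in> bitstrings p" "b' \<in> bitstrings p" and eq: "b(p := t) = b'(p := t')"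
  have "b i = b' i" for i
    using fun_cong[OF eq, of i] b unfolding bitstrings_def by (cases "i = p") auto
  then show "b = b' \<and> t = t'"
    using fun_cong[OF eq, of p] by auto
qed

lemma sum_bitstrings_prod:
  fixes f :: "nat \<Rightarrow> bool \<Rightarrow> 'a::comm_semiring_1"
  shows "(\<Sum>b\<in>bitstrings p. \<Prod>i<p. f i (b i)) = (\<Prod>i<p. f i False + f i True)"
proof (induction p)
  case 0
  show ?case by (simp add: bitstrings_0)
next
  case (Suc p)
  have "(\<Sum>b\<in>bitstrings (Suc p). \<Prod>i<Suc p. f i (b i))
      = (\<Sum>(b, t)\<in>bitstrings p \<times> UNIV. \<Prod>i<Suc p. f i ((b(p := t)) i))"
    unfolding bitstrings_Suc sum.reindex[OF inj_on_bitstrings_Suc]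
    by (simp add: case_prod_beta)
  also have "\<dots> = (\<Sum>(b, t)\<in>bitstrings p \<times> UNIV. (\<Prod>i<p. f i (b i)) * f p t)"
    by (intro sum.cong refl) (auto intro!: prod.cong)
  also have "\<dots> = (\<Sum>b\<in>bitstrings p. \<Prod>i<p. f i (b i)) * (f p False + f p True)"
    by (simp add: sum.cartesian_product[symmetric] UNIV_bool sum_distrib_right
        distrib_left sum.distrib)
  finally show ?case by (simp add: Suc)
qed

lemma qinner_tensor: "qinner p (tensor p v) (tensor p w) = (\<Prod>i<p. inner2 (v i) (w i))"
proof -
  have "qinner p (tensor p v) (tensor p w)
      = (\<Sum>b\<in>bitstrings p. \<Prod>i<p. cnj (v i (b i)) * w i (b i))"
    unfolding qinner_def tensor_def by (intro sum.cong refl) (simp add: prod.distrib)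
  also have "\<dots> = (\<Prod>i<p. inner2 (v i) (w i))"
    by (simp add: sum_bitstrings_prod[of "\<lambda>i t. cnj (v i t) * w i t"] inner2_def)
  finally show ?thesis .
qed

lemma tensor_neq_0:
  assumes "\<And>i. i < p \<Longrightarrow> nonzero2 (w i)"
  shows "tensor p w \<noteq> (\<lambda>_. 0)"
proof
  define b where "b i \<longleftrightarrow> i < p \<and> w i True \<noteq> 0" for i
  assume "tensor p w = (\<lambda>_. 0)"
  then have "tensor p w b = 0" by simp
  moreover have "b \<in> bitstrings p" unfolding b_def bitstrings_def by simp
  moreover have "w i (b i) \<noteq> 0" if "i < p" for i
    using assms[OF that] that unfolding b_def nonzero2_def by (cases "w i True = 0") auto
  ultimately show False unfolding tensor_def by simp
qed

section \<open>Unextendible families of local vectors\<close>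

locale local_upb =
  fixes S :: "'a set" and p :: nat and v :: "'a \<Rightarrow> nat \<Rightarrow> bool \<Rightarrow> complex"
  assumes finite_S: "finite S"
    and nonzero_v: "\<And>x k. x \<in> S \<Longrightarrow> k < p \<Longrightarrow> nonzero2 (v x k)"
    and orthogonal_v:
      "\<And>x y. x \<in> S \<Longrightarrow> y \<in> S \<Longrightarrow> x \<noteq> y \<Longrightarrow> \<exists>k<p. inner2 (v x k) (v y k) = 0"
    and unextendible_v:
      "\<And>w. \<forall>k<p. nonzero2 (w k) \<Longrightarrow> \<forall>x\<in>S. \<exists>k<p. inner2 (v x k) (w k) = 0 \<Longrightarrow> False"
begin

definition orth_at :: "nat \<Rightarrow> 'a \<Rightarrow> 'a \<Rightarrow> bool" where
  "orth_at k x y \<longleftrightarrow> inner2 (v x k) (v y k) = 0"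

definition par_at :: "nat \<Rightarrow> 'a \<Rightarrow> 'a \<Rightarrow> bool" where
  "par_at k x y \<longleftrightarrow> parallel2 (v x k) (v y k)"

definition orth_set :: "nat \<Rightarrow> 'a \<Rightarrow> 'a set" where
  "orth_set k x = {y \<in> S. orth_at k x y}"

definition parallel_set :: "nat \<Rightarrow> 'a set \<Rightarrow> bool" where
  "parallel_set k P \<longleftrightarrow> P \<subseteq> S \<and> (\<forall>x\<in>P. \<forall>y\<in>P. par_at k x y)"

definition par_pair :: "nat \<Rightarrow> 'a set \<Rightarrow> bool" where
  "par_pair k P \<longleftrightarrow> parallel_set k P \<and> card P = 2"

definition doubly_orth :: "nat \<Rightarrow> 'a set" where
  "doubly_orth k = {x \<in> S. card (orth_set k x) = 2}"

definition orth_preimage :: "nat \<Rightarrow> 'a set \<Rightarrow> 'a set" where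
  "orth_preimage k P = {x \<in> S. orth_set k x = P}"

lemma orth_at_sym: "orth_at k x y \<Longrightarrow> orth_at k y x"
  unfolding orth_at_def by (rule inner2_eq_0_commute)

lemma not_orth_at_self: "x \<in> S \<Longrightarrow> k < p \<Longrightarrow> \<not> orth_at k x x"
  unfolding orth_at_def using inner2_self_neq_0 nonzero_v by blast

lemma par_at_refl: "par_at k x x"
  unfolding par_at_def by (rule parallel2_refl)

lemma par_at_sym: "par_at k x y \<Longrightarrow> par_at k y x"
  unfolding par_at_def by (rule parallel2_sym)

lemma par_at_trans: "par_at k x y \<Longrightarrow> par_at k y z \<Longrightarrow> y \<in> S \<Longrightarrow> k < p \<Longrightarrow> par_at k x z"
  unfolding par_at_def using parallel2_trans nonzero_v by blast

lemma par_at_orth_at: "par_at k x y \<Longrightarrow> orth_at k y z \<Longrightarrow> y \<in> S \<Longrightarrow> k < p \<Longrightarrow> orth_at k x z"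
  unfolding par_at_def orth_at_def using parallel2_inner2_eq_0 nonzero_v by blast

lemma orth_at_par_at: "orth_at k x y \<Longrightarrow> orth_at k y z \<Longrightarrow> y \<in> S \<Longrightarrow> k < p \<Longrightarrow> par_at k x z"
  unfolding par_at_def orth_at_def using inner2_eq_0_parallel2 nonzero_v by blast

lemma S_nonempty: "S \<noteq> {}"
  using unextendible_v[of "\<lambda>_ _. 1"] by (auto simp: nonzero2_def)

text \<open>Choosing at each party \<open>k\<close> the vector orthogonal to the local vector of \<open>c k\<close> gives a
  product vector orthogonal to every state that is parallel to \<open>c k\<close> at some party \<open>k\<close>.\<close>

lemma no_parallel_cover:
  assumes c: "\<forall>k<p. c k \<in> S" and cover: "\<forall>x\<in>S. \<exists>k<p. par_at k x (c k)"
  shows False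
proof (rule unextendible_v)
  show "\<forall>k<p. nonzero2 (perp2 (v (c k) k))"
    using c nonzero_v nonzero2_perp2 by blast
  show "\<forall>x\<in>S. \<exists>k<p. inner2 (v x k) (perp2 (v (c k) k)) = 0"
  proof
    fix x assume "x \<in> S"
    then obtain k where k: "k < p" "par_at k x (c k)" using cover by blast
    then have "inner2 (v x k) (perp2 (v (c k) k)) = 0"
      using parallel2_inner2_eq_0[OF _ inner2_perp2] c nonzero_v unfolding par_at_def by blast
    with k show "\<exists>k<p. inner2 (v x k) (perp2 (v (c k) k)) = 0" by blast
  qed
qed

text \<open>The states outside \<open>A\<close> can each be covered at a party of their own.\<close>

lemma no_partial_parallel_cover:
  assumes A: "A \<subseteq> S" and K: "K \<subseteq> {..<p}" and c: "\<forall>k\<in>K. c k \<in> S"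
    and cover: "\<forall>x\<in>A. \<exists>k\<in>K. par_at k x (c k)"
    and card: "card (S - A) \<le> card ({..<p} - K)"
  shows False
proof -
  obtain h where h: "h ` (S - A) \<subseteq> {..<p} - K" "inj_on h (S - A)"
    using card_le_inj[OF _ _ card] finite_S by auto
  obtain s where s: "s \<in> S" using S_nonempty by blast
  define c' where
    "c' k = (if k \<in> K then c k else if k \<in> h ` (S - A) then inv_into (S - A) h k else s)" for k
  show False
  proof (rule no_parallel_cover[of c'])
    show "\<forall>k<p. c' k \<in> S"
      unfolding c'_def using c s inv_into_into[of _ h "S - A"] by auto
    show "\<forall>x\<in>S. \<exists>k<p. par_at k x (c' k)"
    proof
      fix x assume x: "x \<in> S"
      show "\<exists>k<p. par_at k x (c' k)"
      proof (cases "x \<in> A")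
        case True
        then show ?thesis using cover K unfolding c'_def by fastforce
      next
        case False
        with x h have "h x \<in> {..<p} - K" "c' (h x) = x"
          unfolding c'_def by (auto simp: inv_into_f_f)
        then show ?thesis using par_at_refl by (metis Diff_iff lessThan_iff)
      qed
    qed
  qed
qed

text \<open>Otherwise replacing the local vector of \<open>x\<close> at party \<open>k\<close> by its orthogonal vector
  would extend \<open>S\<close>.\<close>

lemma orth_set_nonempty:
  assumes x: "x \<in> S" and k: "k < p"
  shows "orth_set k x \<noteq> {}"
proof
  assume empty: "orth_set k x = {}"
  define w where "w = (v x)(k := perp2 (v x k))"
  show False
  proof (rule unextendible_v[of w])
    show "\<forall>k'<p. nonzero2 (w k')"
      unfolding w_def using nonzero_v[OF x] nonzero2_perp2 k by auto
    show "\<forall>y\<in>S. \<exists>k'<p. inner2 (v y k') (w k') = 0"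
    proof
      fix y assume y: "y \<in> S"
      show "\<exists>k'<p. inner2 (v y k') (w k') = 0"
      proof (cases "y = x")
        case True
        then show ?thesis using k unfolding w_def by (auto simp: inner2_perp2)
      next
        case False
        then obtain k' where k': "k' < p" "inner2 (v y k') (v x k') = 0"
          using orthogonal_v[OF y x] by blast
        then have "k' \<noteq> k"
          using empty y inner2_eq_0_commute unfolding orth_set_def orth_at_def by blast
        with k' show ?thesis unfolding w_def by auto
      qed
    qed
  qed
qed

lemma parallel_set_orth_set: "x \<in> S \<Longrightarrow> k < p \<Longrightarrow> parallel_set k (orth_set k x)"
  unfolding parallel_set_def orth_set_def using orth_at_par_at orth_at_sym by blast

lemma finite_orth_set: "finite (orth_set k x)"
  using finite_S unfolding orth_set_def by simp

lemma finite_orth_preimage: "finite (orth_preimage k P)"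
  using finite_S unfolding orth_preimage_def by simp

lemma par_pair_orth_set: "x \<in> doubly_orth k \<Longrightarrow> k < p \<Longrightarrow> par_pair k (orth_set k x)"
  unfolding par_pair_def doubly_orth_def using parallel_set_orth_set by blast

lemma parallel_set_orth_preimage:
  assumes P: "par_pair k P" and k: "k < p"
  shows "parallel_set k (orth_preimage k P)"
proof -
  obtain a where a: "a \<in> P" using P unfolding par_pair_def by fastforce
  then have "a \<in> S" using P unfolding par_pair_def parallel_set_def by blast
  with a show ?thesis
    unfolding parallel_set_def orth_preimage_def orth_set_def
    using orth_at_par_at[OF _ orth_at_sym _ k] by blast
qed

lemma even_sum_card_orth_set:
  assumes "k < p"
  shows "even (\<Sum>x\<in>S. card (orth_set k x))"
proof -
  have "(\<Sum>x\<in>S. card (orth_set k x)) = card (SIGMA x:S. orth_set k x)"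
    using finite_S by (simp add: orth_set_def)
  moreover have "even (card (SIGMA x:S. orth_set k x))"
  proof (rule even_card_involution[where h = prod.swap])
    fix z assume "z \<in> (SIGMA x:S. orth_set k x)"
    then obtain x y where z: "z = (x, y)" "x \<in> S" "y \<in> S" "orth_at k x y"
      unfolding orth_set_def by blast
    then show "prod.swap z \<in> (SIGMA x:S. orth_set k x)"
      unfolding orth_set_def using orth_at_sym by simp
    show "prod.swap (prod.swap z) = z" by simp
    show "prod.swap z \<noteq> z"
      using z not_orth_at_self[OF _ assms] by auto
  qed
  ultimately show ?thesis by simp
qed

end

section \<open>Families of \<open>p + 2\<close> states for odd \<open>p\<close>\<close>

locale odd_upb = local_upb +
  assumes card_S: "card S = p + 2" and odd_p: "odd p"
begin

lemma card_parallel_set_le_2: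
  assumes P: "parallel_set k P" and k: "k < p"
  shows "card P \<le> 2"
proof (rule ccontr)
  assume big: "\<not> card P \<le> 2"
  then obtain a where a: "a \<in> P" by fastforce
  have PS: "P \<subseteq> S" using P unfolding parallel_set_def by blast
  show False
  proof (rule no_partial_parallel_cover[of P "{k}" "\<lambda>_. a"])
    show "P \<subseteq> S" "{k} \<subseteq> {..<p}" "\<forall>k'\<in>{k}. a \<in> S"
      using PS a k by auto
    show "\<forall>x\<in>P. \<exists>k'\<in>{k}. par_at k' x a"
      using P a unfolding parallel_set_def by blast
    have "card (S - P) = card S - card P"
      using PS finite_S by (simp add: card_Diff_subset finite_subset)
    then show "card (S - P) \<le> card ({..<p} - {k})"
      using big card_S k by simp
  qed
qed

lemma par_pairs_intersect:
  assumes P: "par_pair k P" and Q: "par_pair l Q" and k: "k < p" and l: "l < p" "l \<noteq> k"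
  shows "P \<inter> Q \<noteq> {}"
proof
  assume disjoint: "P \<inter> Q = {}"
  obtain a c where a: "a \<in> P" and c: "c \<in> Q"
    using P Q unfolding par_pair_def by fastforce
  have PQ: "P \<subseteq> S" "Q \<subseteq> S" "card P = 2" "card Q = 2"
    using P Q unfolding par_pair_def parallel_set_def by auto
  show False
  proof (rule no_partial_parallel_cover[of "P \<union> Q" "{k, l}" "\<lambda>j. if j = k then a else c"])
    show "P \<union> Q \<subseteq> S" "{k, l} \<subseteq> {..<p}" "\<forall>j\<in>{k, l}. (if j = k then a else c) \<in> S"
      using PQ a c k l by auto
    show "\<forall>x\<in>P \<union> Q. \<exists>j\<in>{k, l}. par_at j x (if j = k then a else c)"
      using P Q a c l unfolding par_pair_def parallel_set_def by auto
    have "card (P \<union> Q) = 4"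
      using PQ disjoint finite_S by (simp add: card_Un_disjoint finite_subset)
    then have "card (S - (P \<union> Q)) = p - 2"
      using PQ finite_S card_S by (simp add: card_Diff_subset finite_subset)
    moreover have "card ({..<p} - {k, l}) = p - 2"
      using k l by (simp add: card_Diff_subset)
    ultimately show "card (S - (P \<union> Q)) \<le> card ({..<p} - {k, l})" by simp
  qed
qed

lemma par_pairs_eq:
  assumes P: "par_pair k P" and Q: "par_pair k Q" and x: "x \<in> P" "x \<in> Q" and k: "k < p"
  shows "P = Q"
proof -
  have "parallel_set k (P \<union> Q)"
    using P Q x par_at_trans[OF _ _ _ k] par_at_sym
    unfolding par_pair_def parallel_set_def by (metis Un_iff le_sup_iff subsetD)
  then have "card (P \<union> Q) \<le> 2"
    using k by (rule card_parallel_set_le_2)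
  moreover have "finite (P \<union> Q)"
    using P Q finite_S unfolding par_pair_def parallel_set_def by (auto intro: finite_subset)
  ultimately have "P = P \<union> Q" "Q = P \<union> Q"
    using P Q unfolding par_pair_def by (metis card_subset_eq sup_ge1 sup_ge2 antisym card_mono)+
  then show ?thesis by simp
qed

lemma card_orth_set:
  assumes x: "x \<in> S" and k: "k < p"
  shows "card (orth_set k x) = 1 \<or> card (orth_set k x) = 2"
proof -
  have "card (orth_set k x) \<noteq> 0"
    using orth_set_nonempty[OF x k] finite_orth_set by simp
  moreover have "card (orth_set k x) \<le> 2"
    using card_parallel_set_le_2[OF parallel_set_orth_set[OF x k] k] .
  ultimately show ?thesis by linarith
qed

lemma odd_card_doubly_orth:
  assumes k: "k < p"
  shows "odd (card (doubly_orth k))"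
proof -
  have "{x \<in> S. odd (card (orth_set k x))} = S - doubly_orth k"
    using card_orth_set[OF _ k] unfolding doubly_orth_def by force
  then have even: "even (card (S - doubly_orth k))"
    using even_sum_card_orth_set[OF k] even_sum_iff[OF finite_S, of "\<lambda>x. card (orth_set k x)"]
    by simp
  have "doubly_orth k \<subseteq> S" unfolding doubly_orth_def by blast
  then have "card (S - doubly_orth k) = card S - card (doubly_orth k)"
    "card (doubly_orth k) \<le> card S"
    using finite_S by (simp_all add: card_Diff_subset finite_subset card_mono)
  with even show ?thesis
    using card_S odd_p by auto
qed

lemma par_pair_exists:
  assumes "k < p"
  shows "\<exists>P. par_pair k P"
proof -
  have "doubly_orth k \<noteq> {}"
    using odd_card_doubly_orth[OF assms] by auto
  then show ?thesis using par_pair_orth_set[OF _ assms] by blast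
qed

text \<open>Two distinct parallel pairs at party \<open>k\<close> absorb every parallel pair at \<open>k\<close>: a
  parallel pair at another party meets both of them, and a further pair at \<open>k\<close> would miss it.\<close>

lemma par_pairs_of_two:
  assumes P: "par_pair k P" and Q: "par_pair k Q" and "P \<noteq> Q" and k: "k < p"
    and T: "par_pair k T"
  shows "T \<in> {P, Q}"
proof -
  have disjoint: "P \<inter> Q = {}"
    using par_pairs_eq[OF P Q _ _ k] \<open>P \<noteq> Q\<close> by blast
  moreover have "P \<subseteq> S" "Q \<subseteq> S" "card P = 2" "card Q = 2"
    using P Q unfolding par_pair_def parallel_set_def by auto
  ultimately have "card (P \<union> Q) = 4"
    using finite_S by (simp add: card_Un_disjoint finite_subset)
  moreover have "card (P \<union> Q) \<le> card S"
    using \<open>P \<subseteq> S\<close> \<open>Q \<subseteq> S\<close> finite_S by (simp add: card_mono)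
  ultimately have "2 \<le> p" using card_S by simp
  define l where "l = (if k = 0 then 1 else 0 :: nat)"
  have l: "l < p" "l \<noteq> k"
    using \<open>2 \<le> p\<close> unfolding l_def by auto
  obtain R where R: "par_pair l R"
    using par_pair_exists[OF l(1)] by blast
  have "R \<inter> P \<noteq> {}" "R \<inter> Q \<noteq> {}"
    using par_pairs_intersect[OF P R k l] par_pairs_intersect[OF Q R k l] by blast+
  then have "R \<subseteq> P \<union> Q"
    using card_2_subset_Un disjoint R unfolding par_pair_def by blast
  moreover obtain x where "x \<in> T" "x \<in> R"
    using par_pairs_intersect[OF T R k l] by blast
  ultimately consider "x \<in> T" "x \<in> P" | "x \<in> T" "x \<in> Q" by blast
  then show ?thesis
    by cases (use par_pairs_eq[OF T P _ _ k] par_pairs_eq[OF T Q _ _ k] in blast)+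
qed

lemma orth_set_eq_par_pair:
  assumes P: "par_pair k P" and w: "w \<in> S" and a: "a \<in> P" "orth_at k w a" and k: "k < p"
  shows "orth_set k w = P"
proof -
  have "P \<subseteq> orth_set k w"
    using P a par_at_orth_at[OF _ orth_at_sym[OF a(2)] _ k] orth_at_sym
    unfolding par_pair_def parallel_set_def orth_set_def by blast
  moreover have "card (orth_set k w) \<le> card P"
    using P card_parallel_set_le_2[OF parallel_set_orth_set[OF w k] k]
    unfolding par_pair_def by simp
  ultimately show ?thesis
    using card_seteq[OF finite_orth_set] by blast
qed

lemma orth_preimage_nonempty:
  assumes P: "par_pair k P" and k: "k < p"
  shows "orth_preimage k P \<noteq> {}"
proof -
  obtain a where a: "a \<in> P" using P unfolding par_pair_def by fastforce
  then have "a \<in> S" using P unfolding par_pair_def parallel_set_def by blast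
  then obtain w where "w \<in> S" "orth_at k a w"
    using orth_set_nonempty[OF _ k] unfolding orth_set_def by blast
  then have "w \<in> orth_preimage k P"
    using orth_set_eq_par_pair[OF P _ a orth_at_sym k] unfolding orth_preimage_def by blast
  then show ?thesis by blast
qed

lemma orth_preimage_swap:
  assumes P: "par_pair k P" and Q: "par_pair k Q" and k: "k < p"
    and pairs: "\<And>T. par_pair k T \<Longrightarrow> T \<in> {P, Q}"
    and two: "card (orth_preimage k P) = 2"
  shows "orth_preimage k P = Q \<and> orth_preimage k Q = P"
proof -
  have "orth_preimage k P \<noteq> P"
  proof
    assume eq: "orth_preimage k P = P"
    obtain a where "a \<in> P" using P unfolding par_pair_def by fastforce
    with eq have "a \<in> S" "orth_at k a a"
      unfolding orth_preimage_def orth_set_def by blast+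
    then show False using not_orth_at_self k by blast
  qed
  moreover have "par_pair k (orth_preimage k P)"
    using parallel_set_orth_preimage[OF P k] two unfolding par_pair_def by blast
  ultimately have PQ: "orth_preimage k P = Q"
    using pairs by blast
  have "P \<subseteq> orth_preimage k Q"
  proof
    fix b assume b: "b \<in> P"
    obtain q where q: "q \<in> Q" using Q unfolding par_pair_def by fastforce
    with PQ have "q \<in> S" "orth_set k q = P"
      unfolding orth_preimage_def by blast+
    with b have "orth_at k b q" "b \<in> S"
      unfolding orth_set_def using orth_at_sym by blast+
    then show "b \<in> orth_preimage k Q"
      using orth_set_eq_par_pair[OF Q _ q] k unfolding orth_preimage_def by blast
  qed
  moreover have "card (orth_preimage k Q) \<le> card P"
    using P card_parallel_set_le_2[OF parallel_set_orth_preimage[OF Q k] k]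
    unfolding par_pair_def by simp
  ultimately show ?thesis
    using PQ card_seteq[OF finite_orth_preimage] by blast
qed

text \<open>The orthogonal classes of two parallel pairs are either the pairs themselves, swapped, or
  two singletons.\<close>

lemma even_card_doubly_orth_of_two:
  assumes P: "par_pair k P" and Q: "par_pair k Q" and "P \<noteq> Q" and k: "k < p"
  shows "even (card (doubly_orth k))"
proof -
  have pairs: "\<And>T. par_pair k T \<Longrightarrow> T \<in> {P, Q}"
    using par_pairs_of_two[OF P Q \<open>P \<noteq> Q\<close> k] by blast
  have "doubly_orth k = orth_preimage k P \<union> orth_preimage k Q"
  proof
    show "doubly_orth k \<subseteq> orth_preimage k P \<union> orth_preimage k Q"
      using pairs par_pair_orth_set[OF _ k]
      unfolding doubly_orth_def orth_preimage_def by blast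
    show "orth_preimage k P \<union> orth_preimage k Q \<subseteq> doubly_orth k"
      using P Q unfolding doubly_orth_def orth_preimage_def par_pair_def by auto
  qed
  moreover have "orth_preimage k P \<inter> orth_preimage k Q = {}"
    using \<open>P \<noteq> Q\<close> unfolding orth_preimage_def by blast
  ultimately have card_doubly:
    "card (doubly_orth k) = card (orth_preimage k P) + card (orth_preimage k Q)"
    by (simp add: card_Un_disjoint finite_orth_preimage)
  have card_le: "card (orth_preimage k P) \<le> 2" "card (orth_preimage k Q) \<le> 2"
    using card_parallel_set_le_2 parallel_set_orth_preimage P Q k by blast+
  have card_pos: "card (orth_preimage k P) \<noteq> 0" "card (orth_preimage k Q) \<noteq> 0"
    using orth_preimage_nonempty P Q k finite_orth_preimage by auto
  have pairs': "\<And>T. par_pair k T \<Longrightarrow> T \<in> {Q, P}"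
    using pairs by blast
  consider "card (orth_preimage k P) = 2" | "card (orth_preimage k Q) = 2"
    | "card (orth_preimage k P) = 1" "card (orth_preimage k Q) = 1"
    using card_le card_pos by linarith
  then show ?thesis
  proof cases
    case 1
    then show ?thesis
      using orth_preimage_swap[OF P Q k pairs] card_doubly P Q unfolding par_pair_def by simp
  next
    case 2
    then show ?thesis
      using orth_preimage_swap[OF Q P k pairs'] card_doubly P Q unfolding par_pair_def by simp
  next
    case 3
    then show ?thesis
      using card_doubly by simp
  qed
qed

lemma par_pair_unique:
  assumes "par_pair k P" "par_pair k Q" "k < p"
  shows "P = Q"
  using even_card_doubly_orth_of_two[OF assms(1,2) _ assms(3)] odd_card_doubly_orth[OF assms(3)]
  by blast

lemma card_doubly_orth:
  assumes k: "k < p"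
  shows "card (doubly_orth k) = 1"
proof -
  obtain P where P: "par_pair k P"
    using par_pair_exists[OF k] by blast
  have "doubly_orth k \<subseteq> orth_preimage k P"
    using par_pair_orth_set[OF _ k] par_pair_unique[OF _ P k]
    unfolding doubly_orth_def orth_preimage_def by blast
  then have "card (doubly_orth k) \<le> card (orth_preimage k P)"
    by (rule card_mono[OF finite_orth_preimage])
  also have "\<dots> \<le> 2"
    using card_parallel_set_le_2[OF parallel_set_orth_preimage[OF P k] k] .
  finally show ?thesis
    using odd_card_doubly_orth[OF k] by (auto simp: le_Suc_eq numeral_2_eq_2)
qed

text \<open>The \<open>p + 1\<close> other states are orthogonal to \<open>x\<close> at one of only \<open>p\<close> parties.\<close>

lemma doubly_orth_cover:
  assumes x: "x \<in> S"
  shows "\<exists>k<p. x \<in> doubly_orth k"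
proof (rule ccontr)
  assume "\<not> ?thesis"
  then have le_1: "card (orth_set k x) \<le> 1" if "k < p" for k
    using card_orth_set[OF x that] x that unfolding doubly_orth_def by fastforce
  have "S - {x} \<subseteq> (\<Union>k<p. orth_set k x)"
    using orthogonal_v[OF x] unfolding orth_set_def orth_at_def by blast
  then have "card (S - {x}) \<le> card (\<Union>k<p. orth_set k x)"
    by (rule card_mono[rotated]) (simp add: finite_orth_set)
  also have "\<dots> \<le> (\<Sum>k<p. card (orth_set k x))"
    by (rule card_UN_le) simp
  also have "\<dots> \<le> (\<Sum>k<p. 1)"
    using le_1 by (intro sum_mono) simp
  finally show False
    using x card_S finite_S by simp
qed

lemma contradiction: False
proof -
  have "S \<subseteq> (\<Union>k<p. doubly_orth k)"
    using doubly_orth_cover by blast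
  then have "card S \<le> card (\<Union>k<p. doubly_orth k)"
    by (rule card_mono[rotated]) (use finite_S in \<open>simp add: doubly_orth_def\<close>)
  also have "\<dots> \<le> (\<Sum>k<p. card (doubly_orth k))"
    by (rule card_UN_le) simp
  also have "\<dots> = p"
    by (simp add: card_doubly_orth)
  finally show False
    using card_S by simp
qed

end

lemma is_UPB_local_upb:
  assumes upb: "is_UPB p S"
  shows "local_upb S p (\<lambda>x. SOME v. x = tensor p v)" (is "local_upb S p ?v")
proof
  have tensor: "x = tensor p (?v x)" if "x \<in> S" for x
  proof -
    have "\<exists>v. x = tensor p v"
      using upb that unfolding is_UPB_def is_product_def by blast
    then show ?thesis by (rule someI_ex)
  qed
  have qinner: "qinner p x (tensor p w) = (\<Prod>k<p. inner2 (?v x k) (w k))" if "x \<in> S" for x w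
    using qinner_tensor tensor[OF that] by metis
  show "finite S"
    using upb unfolding is_UPB_def by blast
  show "nonzero2 (?v x k)" if "x \<in> S" "k < p" for x k
  proof -
    have "qinner p x x = 1"
      using upb that unfolding is_UPB_def by blast
    then have "(\<Prod>j<p. inner2 (?v x j) (?v x j)) \<noteq> 0"
      using qinner[OF that(1), of "?v x"] tensor[OF that(1)] by simp
    then have "inner2 (?v x k) (?v x k) \<noteq> 0"
      using that(2) by (simp add: prod_zero_iff)
    then show ?thesis unfolding inner2_def nonzero2_def by auto
  qed
  show "\<exists>k<p. inner2 (?v x k) (?v y k) = 0" if "x \<in> S" "y \<in> S" "x \<noteq> y" for x y
  proof -
    have "qinner p x y = 0"
      using upb that unfolding is_UPB_def by blast
    then show ?thesis
      using qinner[OF that(1), of "?v y"] tensor[OF that(2)] by auto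
  qed
  show False if nonzero: "\<forall>k<p. nonzero2 (w k)"
    and orth: "\<forall>x\<in>S. \<exists>k<p. inner2 (?v x k) (w k) = 0" for w
  proof -
    have orth_S: "qinner p x (tensor p w) = 0" if "x \<in> S" for x
      using qinner[OF that] orth that by auto
    have "tensor p w \<notin> S"
      using orth_S upb unfolding is_UPB_def by force
    moreover have "tensor p w \<noteq> (\<lambda>_. 0)"
      using tensor_neq_0 nonzero by blast
    moreover have "is_product p (tensor p w)"
      unfolding is_product_def by blast
    ultimately show False
      using upb orth_S unfolding is_UPB_def by blast
  qed
qed

theorem proposition3:
  fixes p :: nat
  assumes "odd p"
  shows "\<not> (\<exists>S. is_UPB p S \<and> card S = p + 2)"
proof
  assume "\<exists>S. is_UPB p S \<and> card S = p + 2"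
  then obtain S where "is_UPB p S" "card S = p + 2" by blast
  then interpret odd_upb S p "\<lambda>x. SOME v. x = tensor p v"
    using assms is_UPB_local_upb by (simp add: odd_upb_def odd_upb_axioms_def)
  show False by (rule contradiction)
qed

end
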